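(* Let $\Im^k=(V,L)$ be the $(k+1)$-regular tree ($k\ge 1$), let $\Omega=\mathbb{Z}^V$, let $\mathcal{N}$ be the set of all finite nonempty subsets of $V$, and fix $\theta>0$. For $\Lambda\in\mathcal{N}$ and $\sigma\in\Omega$ define $$U_\Lambda(\sigma)=H_\Lambda(\sigma_\Lambda)=\sum_{j=1}^{|\Lambda|}\Big[b_j(\sigma_\Lambda)\ln\frac{\theta}{j}-\ln\big(b_j(\sigma_\Lambda)!\big)\Big],$$ where $\sigma_\Lambda$ is the restriction of $\sigma$ to $\Lambda$ and $b_j(\sigma_\Lambda)$ is the number of distinct values in $\mathbb{Z}$ that appear exactly $j$ times among $\{\sigma(x):x\in\Lambda\}$. Then the potential $U=\{U_\Lambda\}_{\Lambda\in\mathcal{N}}$ is not absolutely summable: for every $x\in V$, $$\sum_{\Lambda\in\mathcal{N},\,x\in\Lambda}\|U_\Lambda\|_\infty=\infty,\qquad \|f\|_\infty:=\sup_{\sigma\in\Omega}|f(\sigma)|.$$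
   Context: A potential $U=\{U_\Lambda\}_{\Lambda\in\mathcal N}$ is called absolutely summable if $\sum_{\Lambda\in\mathcal N,\,x\in\Lambda}\|U_\Lambda\|_\infty<\infty$ for all $x\in V$. The potential above is the one associated with the multivariate Ewens weights $\frac{1}{Z_{|\Lambda|}(\theta)}\prod_{j=1}^{|\Lambda|}(\theta/j)^{b_j(\sigma_\Lambda)}\frac{1}{b_j(\sigma_\Lambda)!}$, via $H_\Lambda=\ln$ of the unnormalized weight. *)

theory Defs
  imports "HOL-Analysis.Analysis"
begin

definition is_walk :: "('v \<Rightarrow> 'v \<Rightarrow> bool) \<Rightarrow> 'v list \<Rightarrow> bool" where
  "is_walk E xs \<longleftrightarrow> xs \<noteq> [] \<and> (\<forall>i. Suc i < length xs \<longrightarrow> E (xs ! i) (xs ! Suc i))"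

definition is_cycle :: "('v \<Rightarrow> 'v \<Rightarrow> bool) \<Rightarrow> 'v list \<Rightarrow> bool" where
  "is_cycle E xs \<longleftrightarrow> length xs \<ge> 3 \<and> distinct xs \<and> is_walk E xs \<and> E (last xs) (hd xs)"

definition regular_tree :: "nat \<Rightarrow> ('v \<Rightarrow> 'v \<Rightarrow> bool) \<Rightarrow> bool" where
  "regular_tree k E \<longleftrightarrow>
     (\<forall>x y. E x y \<longrightarrow> E y x) \<and> (\<forall>x. \<not> E x x) \<and>
     (\<forall>x. finite {y. E x y} \<and> card {y. E x y} = k + 1) \<and>
     (\<forall>u v. \<exists>xs. is_walk E xs \<and> hd xs = u \<and> last xs = v) \<and>
     (\<forall>xs. \<not> is_cycle E xs)"

definition bcount :: "nat \<Rightarrow> 'v set \<Rightarrow> ('v \<Rightarrow> int) \<Rightarrow> nat" where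
  "bcount j \<Lambda> \<sigma> = card {a :: int. card {x \<in> \<Lambda>. \<sigma> x = a} = j}"

definition ewens_U :: "real \<Rightarrow> 'v set \<Rightarrow> ('v \<Rightarrow> int) \<Rightarrow> real" where
  "ewens_U \<theta> \<Lambda> \<sigma> = (\<Sum>j = 1..card \<Lambda>.
      real (bcount j \<Lambda> \<sigma>) * ln (\<theta> / real j) - ln (fact (bcount j \<Lambda> \<sigma>)))"

definition sup_norm :: "(('v \<Rightarrow> int) \<Rightarrow> real) \<Rightarrow> ennreal" where
  "sup_norm f = (SUP \<sigma>. ennreal \<bar>f \<sigma>\<bar>)"

end

theory Submission
  imports Defs
begin

text \<open>
  For the constant configuration every value is taken either never or on the whole of \<Lambda>, so
  \<open>U\<^sub>\<Lambda>(0) = ln (\<theta> / |\<Lambda>|)\<close>, and this is at most \<open>-1\<close> once \<open>|\<Lambda>| \<ge> \<theta> e\<close>.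
  A regular tree of degree at least 2 has arbitrarily long non-backtracking walks, which are
  distinct because there are no cycles; hence the vertex set is infinite and infinitely many
  finite sets containing x are that large. The sum therefore has infinitely many terms \<open>\<ge> 1\<close>.
\<close>

lemma is_walk_Cons:
  assumes "is_walk E xs" "E w (hd xs)"
  shows "is_walk E (w # xs)"
  using assms unfolding is_walk_def
  by (auto simp: nth_Cons hd_conv_nth split: nat.splits)

lemma is_walk_take:
  assumes "is_walk E xs" "0 < m"
  shows "is_walk E (take m xs)"
  using assms unfolding is_walk_def by auto

lemma acyclic_walk_Cons_notin:
  assumes sym: "\<And>a b. E a b \<Longrightarrow> E b a" and acyclic: "\<And>zs. \<not> is_cycle E zs"
    and walk: "is_walk E (v # ys)" "distinct (v # ys)"
    and w: "E v w" "w \<noteq> v" "ys \<noteq> [] \<Longrightarrow> w \<noteq> hd ys"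
  shows "w \<notin> set (v # ys)"
proof
  let ?xs = "v # ys"
  assume "w \<in> set ?xs"
  then obtain i where i: "i < length ?xs" "?xs ! i = w" by (metis in_set_conv_nth)
  have "i \<noteq> 0" using i(2) w(2) by (metis nth_Cons_0)
  moreover have "i \<noteq> 1" using i w(3) by (auto simp: hd_conv_nth)
  ultimately have "2 \<le> i" by linarith
  \<comment> \<open>the walk from v back to its neighbour w closes up to a cycle\<close>
  have "is_cycle E (take (Suc i) ?xs)"
    unfolding is_cycle_def
  proof (intro conjI)
    show "3 \<le> length (take (Suc i) ?xs)" using i \<open>2 \<le> i\<close> by simp
    show "distinct (take (Suc i) ?xs)" using walk(2) by (rule distinct_take)
    show "is_walk E (take (Suc i) ?xs)" using walk(1) by (rule is_walk_take) simp
    have "last (take (Suc i) ?xs) = ?xs ! i" using i(1) by (metis last_snoc take_Suc_conv_app_nth)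
    then show "E (last (take (Suc i) ?xs)) (hd (take (Suc i) ?xs))" using i(2) w(1) sym by simp
  qed
  then show False using acyclic by blast
qed

lemma acyclic_branching_distinct_walk:
  assumes sym: "\<And>a b. E a b \<Longrightarrow> E b a" and irrefl: "\<And>a. \<not> E a a"
    and acyclic: "\<And>zs. \<not> is_cycle E zs"
    and branching: "\<And>v. \<exists>w w'. E v w \<and> E v w' \<and> w \<noteq> w'"
  shows "\<exists>xs. length xs = Suc n \<and> distinct xs \<and> is_walk E xs"
proof (induction n)
  case 0
  show ?case by (rule exI[of _ "[undefined]"]) (auto simp: is_walk_def)
next
  case (Suc n)
  then obtain v ys where xs: "length (v # ys) = Suc n" "distinct (v # ys)" "is_walk E (v # ys)"
    by (metis length_Suc_conv)
  obtain w where w: "E v w" "ys \<noteq> [] \<Longrightarrow> w \<noteq> hd ys"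
    using branching[of v] by blast
  have "w \<notin> set (v # ys)"
    using acyclic_walk_Cons_notin[OF sym acyclic xs(3,2) w(1) _ w(2)] w(1) irrefl by blast
  then show ?case
    using xs w(1) sym by (intro exI[of _ "w # v # ys"]) (auto intro!: is_walk_Cons)
qed

lemma regular_tree_branching:
  assumes "k \<ge> 1" "regular_tree k E"
  shows "\<exists>w w'. E v w \<and> E v w' \<and> w \<noteq> w'"
proof -
  have "Suc (Suc 0) \<le> card {w. E v w}"
    using assms unfolding regular_tree_def by simp
  then show ?thesis by (auto simp: card_le_Suc_iff)
qed

lemma regular_tree_infinite:
  assumes "k \<ge> 1" "regular_tree k (E :: 'v \<Rightarrow> 'v \<Rightarrow> bool)"
  shows "infinite (UNIV :: 'v set)"
proof
  assume fin: "finite (UNIV :: 'v set)"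
  have "\<exists>xs :: 'v list. length xs = Suc (card (UNIV :: 'v set)) \<and> distinct xs \<and> is_walk E xs"
    using assms(2) regular_tree_branching[OF assms]
    by (intro acyclic_branching_distinct_walk) (auto simp: regular_tree_def)
  then obtain xs :: "'v list" where "card (set xs) = Suc (card (UNIV :: 'v set))"
    by (metis distinct_card)
  moreover have "card (set xs) \<le> card (UNIV :: 'v set)" using fin by (intro card_mono) auto
  ultimately show False by simp
qed

lemma infinite_large_finite_sets_containing:
  assumes "infinite (UNIV :: 'a set)"
  shows "infinite {L. finite L \<and> (x :: 'a) \<in> L \<and> N \<le> card L}"
    (is "infinite ?S")
proof
  assume "finite ?S"
  moreover have "{Suc N..} \<subseteq> card ` ?S"
  proof
    fix n assume "n \<in> {Suc N..}"
    then obtain m where m: "n = Suc m" "N \<le> m" by (metis atLeast_iff Suc_le_D Suc_le_mono)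
    obtain A where A: "finite A" "card A = m" "A \<subseteq> UNIV - {x}"
      using infinite_arbitrarily_large[of "UNIV - {x}"] assms by auto
    then have "insert x A \<in> ?S" "card (insert x A) = n"
      using m by (auto simp: card_insert_if)
    then show "n \<in> card ` ?S" by (metis image_eqI)
  qed
  ultimately show False by (meson finite_imageI finite_subset infinite_Ici)
qed

lemma bcount_const:
  assumes "finite L" "L \<noteq> {}" "j \<ge> 1"
  shows "bcount j L (\<lambda>_. c) = (if j = card L then 1 else 0)"
proof -
  have "{y \<in> L. c = a} = (if a = c then L else {})" for a by auto
  then have "{a. card {y \<in> L. c = a} = j} = (if j = card L then {c} else {})"
    using assms by (auto split: if_splits)
  then show ?thesis unfolding bcount_def by simp
qed

lemma ewens_U_const:
  assumes "finite L" "L \<noteq> {}"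
  shows "ewens_U \<theta> L (\<lambda>_. c) = ln (\<theta> / real (card L))"
proof -
  have "1 \<le> card L" using assms by (simp add: Suc_le_eq card_gt_0_iff)
  have "ewens_U \<theta> L (\<lambda>_. c) = (\<Sum>j = 1..card L. if j = card L then ln (\<theta> / real j) else 0)"
    unfolding ewens_U_def by (intro sum.cong refl) (simp add: bcount_const[OF assms])
  also have "\<dots> = ln (\<theta> / real (card L))"
    using \<open>1 \<le> card L\<close> by (simp add: sum.delta')
  finally show ?thesis .
qed

lemma sup_norm_ge: "ennreal \<bar>f \<sigma>\<bar> \<le> sup_norm f"
  unfolding sup_norm_def by (rule SUP_upper) simp

lemma ln_div_le_minus_one:
  fixes \<theta> n :: real
  assumes "\<theta> > 0" "\<theta> * exp 1 \<le> n"
  shows "ln (\<theta> / n) \<le> -1"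
proof -
  have "0 < \<theta> * exp 1" using assms(1) by simp
  then have "0 < n" using assms(2) by linarith
  have "ln \<theta> + 1 \<le> ln n"
    using assms \<open>0 < \<theta> * exp 1\<close> \<open>0 < n\<close> ln_le_cancel_iff[of "\<theta> * exp 1" n] by (simp add: ln_mult)
  then show ?thesis
    using assms(1) \<open>0 < n\<close> by (simp add: ln_div)
qed

lemma infsum_superconst_infinite_subset_ennreal:
  fixes f :: "'a \<Rightarrow> ennreal"
  assumes "B \<subseteq> A" "infinite B" "b > 0" "\<And>x. x \<in> B \<Longrightarrow> b \<le> f x"
  shows "infsum f A = \<infinity>"
proof -
  have "infsum f B = \<infinity>"
    using assms by (intro infsum_superconst_infinite_ennreal[where b = b])
  moreover have "infsum f B \<le> infsum f A"
    using assms(1) by (intro infsum_mono_neutral) (auto intro: nonneg_summable_on_complete)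
  ultimately show ?thesis by (simp add: top_unique)
qed

theorem lemma3p2:
  fixes k :: nat and E :: "'v \<Rightarrow> 'v \<Rightarrow> bool" and \<theta> :: real and x :: 'v
  assumes "k \<ge> 1" and "regular_tree k E" and "\<theta> > 0"
  shows "(\<Sum>\<^sub>\<infinity>\<Lambda>\<in>{\<Lambda>. finite \<Lambda> \<and> \<Lambda> \<noteq> {} \<and> x \<in> \<Lambda>}. sup_norm (ewens_U \<theta> \<Lambda>)) = \<infinity>"
proof (rule infsum_superconst_infinite_subset_ennreal)
  define N where "N = nat \<lceil>\<theta> * exp 1\<rceil>"
  let ?S = "{L. finite L \<and> x \<in> L \<and> N \<le> card L}"
  show "?S \<subseteq> {\<Lambda>. finite \<Lambda> \<and> \<Lambda> \<noteq> {} \<and> x \<in> \<Lambda>}" by auto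
  show "infinite ?S"
    by (rule infinite_large_finite_sets_containing[OF regular_tree_infinite[OF assms(1,2)]])
  show "1 \<le> sup_norm (ewens_U \<theta> L)" if "L \<in> ?S" for L
  proof -
    have L: "finite L" "L \<noteq> {}" "\<theta> * exp 1 \<le> real (card L)"
      using that real_nat_ceiling_ge[of "\<theta> * exp 1"] unfolding N_def by auto
    have "1 \<le> \<bar>ewens_U \<theta> L (\<lambda>_. 0)\<bar>"
      using ln_div_le_minus_one[OF assms(3) L(3)] ewens_U_const[OF L(1,2)] by simp
    then show ?thesis by (metis ennreal_1 ennreal_leI order_trans sup_norm_ge)
  qed
qed simp

end
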